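(* Let $\sigma$ be a meromorphic nonlinearity on $\mathbb{C}$ satisfying the SAC, and let $\{\beta_s\}_{s\in\mathcal{I}}$ be a nonempty finite set of nonzero real numbers. Let $\Gamma$ be the set of $(\gamma_s)_{s\in\mathcal{I}}\in\mathbb{R}^{\mathcal{I}}$ such that $(\zeta,\{(\alpha_s,\beta_s,\gamma_s)\}_{s\in\mathcal{I}})$ is an affine symmetry of $\sigma$ for some $\zeta\in\mathbb{R}$ and nonzero real numbers $\{\alpha_s\}_{s\in\mathcal{I}}$. Then $\Gamma$ is a (possibly empty) countable union of parallel lines in $\mathbb{R}^{\mathcal{I}}$; more precisely, there exists a countable set $\Gamma'\subset\mathbb{R}^{\mathcal{I}}$ such that $\Gamma=\bigcup_{\gamma'\in\Gamma'}\{(\gamma'_s+t\beta_s)_{s\in\mathcal{I}}:t\in\mathbb{R}\}$.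
   Context: A meromorphic nonlinearity is a meromorphic function $\sigma$ on $\mathbb{C}$ whose restriction to $\mathbb{R}$ is a nonlinearity, i.e. continuous real-valued and not of the form $t\mapsto at+b$. SAC (simple alignment condition): for every finite set of real triples $\{(\alpha_s,\beta_s,\gamma_s)\}$, if the set of poles of $f=\sum_s\alpha_s\sigma(\beta_s\cdot+\gamma_s)$ is bounded, then $f$ is constant on $\mathbb{C}$. An affine symmetry of $\sigma$ is $(\zeta,\{(\alpha_s,\beta_s,\gamma_s)\}_{s\in\mathcal{I}})$ with $\mathcal{I}$ nonempty finite, real entries, $\sum_s\alpha_s\sigma(\beta_st+\gamma_s)=\zeta$ for all $t\in\mathbb{R}$, and no proper $\mathcal{I}'\subsetneq\mathcal{I}$ such that $\{\sigma(\beta_s\cdot+\gamma_s)\}_{s\in\mathcal{I}'}\cup\{\mathbf1\}$ is linearly dependent. *)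

theory Defs
  imports "HOL-Complex_Analysis.Complex_Analysis"
begin

definition meromorphic_nonlinearity :: "(complex \<Rightarrow> complex) \<Rightarrow> bool" where
  "meromorphic_nonlinearity \<sigma> \<longleftrightarrow>
     \<sigma> meromorphic_on UNIV \<and>
     (\<forall>x::real. \<sigma> analytic_on {complex_of_real x}) \<and>
     (\<forall>x::real. \<sigma> (complex_of_real x) \<in> \<real>) \<and>
     \<not> (\<exists>a b::real. \<forall>t::real. \<sigma> (complex_of_real t) = complex_of_real (a * t + b))"

text \<open>A finite set of real triples (alpha, beta, gamma);
"constant on C" is understood for the meromorphic function f, i.e. f agrees with a
constant outside a discrete (sparse) set.\<close>
definition SAC :: "(complex \<Rightarrow> complex) \<Rightarrow> bool" where
  "SAC \<sigma> \<longleftrightarrow>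
     (\<forall>T :: (real \<times> real \<times> real) set. finite T \<longrightarrow>
        (let f = (\<lambda>z. \<Sum>(a, b, c)\<in>T. complex_of_real a * \<sigma> (complex_of_real b * z + complex_of_real c))
         in bounded {z. is_pole f z} \<longrightarrow> (\<exists>k. eventually (\<lambda>z. f z = k) (cosparse UNIV))))"

definition lin_dep_with_one ::
  "(complex \<Rightarrow> complex) \<Rightarrow> 'i set \<Rightarrow> ('i \<Rightarrow> real) \<Rightarrow> ('i \<Rightarrow> real) \<Rightarrow> bool" where
  "lin_dep_with_one \<sigma> J \<beta> \<gamma> \<longleftrightarrow>
     (\<exists>(c :: 'i \<Rightarrow> real) (c0 :: real). (c0 \<noteq> 0 \<or> (\<exists>s\<in>J. c s \<noteq> 0)) \<and>
        (\<forall>t::real. (\<Sum>s\<in>J. complex_of_real (c s) * \<sigma> (complex_of_real (\<beta> s * t + \<gamma> s)))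
                    + complex_of_real c0 = 0))"

definition affine_symmetry ::
  "(complex \<Rightarrow> complex) \<Rightarrow> real \<Rightarrow> 'i set \<Rightarrow> ('i \<Rightarrow> real) \<Rightarrow> ('i \<Rightarrow> real) \<Rightarrow> ('i \<Rightarrow> real) \<Rightarrow> bool" where
  "affine_symmetry \<sigma> \<zeta> I \<alpha> \<beta> \<gamma> \<longleftrightarrow>
     finite I \<and> I \<noteq> {} \<and>
     (\<forall>t::real. (\<Sum>s\<in>I. complex_of_real (\<alpha> s) * \<sigma> (complex_of_real (\<beta> s * t + \<gamma> s)))
                 = complex_of_real \<zeta>) \<and>
     \<not> (\<exists>J. J \<subset> I \<and> lin_dep_with_one \<sigma> J \<beta> \<gamma>)"

end

theory Submission
  imports Defs
begin

text \<open>
  The set of offset vectors of affine symmetries is invariant under \<open>\<gamma> \<mapsto> \<gamma> + t\<beta>\<close>, so it is a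
  union of lines parallel to \<open>\<beta>\<close>, and it suffices to show that its slice \<open>\<gamma> s\<^sub>0 = 0\<close> is countable.
  Let \<open>f = \<Sum>\<^sub>s \<alpha>\<^sub>s \<sigma>(\<beta>\<^sub>s z + \<gamma>\<^sub>s)\<close>. By the identity theorem \<open>f\<close> is constant on \<open>\<complex>\<close>, so every pole of
  one of its terms is cancelled by a pole of another term at the same point \<open>z\<close>; two such terms
  have \<open>\<gamma>\<^sub>s/\<beta>\<^sub>s - \<gamma>\<^sub>s\<^sub>'/\<beta>\<^sub>s\<^sub>'\<close> equal to a difference \<open>p/\<beta>\<^sub>s - p'/\<beta>\<^sub>s\<^sub>'\<close> of rescaled poles of \<open>\<sigma>\<close>. If some
  \<open>\<gamma>\<^sub>s/\<beta>\<^sub>s - \<gamma>\<^sub>s\<^sub>0/\<beta>\<^sub>s\<^sub>0\<close> were not a finite sum of such differences, the terms \<open>s\<close> for which it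
  is such a sum would form a proper subsum without poles; by the SAC that subsum would be
  constant, contradicting the minimality of the symmetry. Since \<open>\<sigma>\<close> has countably many poles, the slice is countable.
\<close>

definition shallow_net ::
  "(complex \<Rightarrow> complex) \<Rightarrow> 'i set \<Rightarrow> ('i \<Rightarrow> real) \<Rightarrow> ('i \<Rightarrow> real) \<Rightarrow> ('i \<Rightarrow> real) \<Rightarrow> complex \<Rightarrow> complex"
  where "shallow_net \<sigma> A \<alpha> \<beta> \<gamma> w =
    (\<Sum>s\<in>A. of_real (\<alpha> s) * \<sigma> (of_real (\<beta> s) * w + of_real (\<gamma> s)))"

lemma shallow_net_of_real:
  "shallow_net \<sigma> A \<alpha> \<beta> \<gamma> (of_real t) = (\<Sum>s\<in>A. of_real (\<alpha> s) * \<sigma> (of_real (\<beta> s * t + \<gamma> s)))"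
  by (simp add: shallow_net_def)

lemma shallow_net_split:
  assumes "finite I" "J \<subseteq> I"
  shows "shallow_net \<sigma> I \<alpha> \<beta> \<gamma> w = shallow_net \<sigma> J \<alpha> \<beta> \<gamma> w + shallow_net \<sigma> (I - J) \<alpha> \<beta> \<gamma> w"
  using assms by (simp add: shallow_net_def sum.subset_diff)

lemma shallow_net_meromorphic:
  assumes "\<sigma> meromorphic_on UNIV"
  shows "shallow_net \<sigma> A \<alpha> \<beta> \<gamma> meromorphic_on UNIV"
proof -
  have "(\<lambda>w. \<sigma> (of_real (\<beta> s) * w + of_real (\<gamma> s))) meromorphic_on UNIV" for s
    by (rule meromorphic_on_compose[OF assms]) (auto intro!: analytic_intros)
  then show ?thesis
    unfolding shallow_net_def by (intro meromorphic_intros)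
qed

lemma isCont_shallow_net_of_real:
  assumes "\<forall>x::real. \<sigma> analytic_on {of_real x}"
  shows "isCont (shallow_net \<sigma> A \<alpha> \<beta> \<gamma>) (of_real t)"
proof -
  have "isCont \<sigma> (of_real (\<beta> s) * of_real t + of_real (\<gamma> s))" for s
    using assms analytic_at_imp_isCont by (metis of_real_add of_real_mult)
  then have "isCont (\<lambda>w. \<sigma> (of_real (\<beta> s) * w + of_real (\<gamma> s))) (of_real t)" for s
    by (intro continuous_intros isCont_o2[where f = "\<lambda>w. of_real (\<beta> s) * w + of_real (\<gamma> s)"])
  then show ?thesis
    unfolding shallow_net_def by (intro continuous_intros)
qed

lemma filterlim_affine_at:
  fixes b c :: "'a::real_normed_field"
  assumes "b \<noteq> 0"
  shows "filterlim (\<lambda>w. b * w + c) (at (b * z + c)) (at z)"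
proof -
  have "((\<lambda>w. b * w + c) \<longlongrightarrow> b * z + c) (at z)"
    by (intro tendsto_intros)
  moreover have "eventually (\<lambda>w. b * w + c \<noteq> b * z + c) (at z)"
    using assms by (auto simp: eventually_at_filter)
  ultimately show ?thesis
    by (simp add: filterlim_at)
qed

lemma shallow_net_tendsto:
  assumes mero: "\<sigma> meromorphic_on UNIV" and "\<forall>s\<in>A. \<beta> s \<noteq> 0"
    and no_pole: "\<forall>s\<in>A. \<not> is_pole \<sigma> (of_real (\<beta> s) * z + of_real (\<gamma> s))"
  shows "\<exists>l. (shallow_net \<sigma> A \<alpha> \<beta> \<gamma> \<longlongrightarrow> l) (at z)"
proof -
  have "\<exists>l. ((\<lambda>w. \<sigma> (of_real (\<beta> s) * w + of_real (\<gamma> s))) \<longlongrightarrow> l) (at z)" if "s \<in> A" for s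
  proof -
    have "not_essential \<sigma> (of_real (\<beta> s) * z + of_real (\<gamma> s))"
      using mero by (simp add: meromorphic_on_altdef)
    with no_pole that obtain l where "(\<sigma> \<longlongrightarrow> l) (at (of_real (\<beta> s) * z + of_real (\<gamma> s)))"
      unfolding not_essential_def by blast
    then show ?thesis
      using filterlim_compose[OF _ filterlim_affine_at] \<open>s \<in> A\<close> assms(2) by fastforce
  qed
  then obtain L where "\<forall>s\<in>A. ((\<lambda>w. \<sigma> (of_real (\<beta> s) * w + of_real (\<gamma> s))) \<longlongrightarrow> L s) (at z)"
    by metis
  then have "(shallow_net \<sigma> A \<alpha> \<beta> \<gamma> \<longlongrightarrow> (\<Sum>s\<in>A. of_real (\<alpha> s) * L s)) (at z)"
    unfolding shallow_net_def by (intro tendsto_intros) auto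
  then show ?thesis ..
qed

lemma tendsto_imp_not_is_pole:
  fixes f :: "'a::perfect_space \<Rightarrow> 'b::real_normed_vector"
  shows "(f \<longlongrightarrow> l) (at z) \<Longrightarrow> \<not> is_pole f z"
  unfolding is_pole_def using not_tendsto_and_filterlim_at_infinity[OF at_neq_bot] by blast

lemma meromorphic_eventually_eq_if_const_on_reals:
  assumes mero: "F meromorphic_on UNIV" and const: "\<forall>t::real. F (of_real t) = k"
  shows "eventually (\<lambda>w. F w = k) (at z)"
proof -
  have "\<not> eventually (\<lambda>w. F w \<noteq> k) (at 0)"
  proof
    assume "eventually (\<lambda>w. F w \<noteq> k) (at 0)"
    then obtain e where "e > 0" "\<And>w. w \<noteq> 0 \<Longrightarrow> dist w 0 < e \<Longrightarrow> F w \<noteq> k"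
      unfolding eventually_at by auto
    then have "F (of_real (e/2)) \<noteq> k" by simp
    with const show False by blast
  qed
  then have "eventually (\<lambda>w. F w = k) (cosparse UNIV)"
    using meromorphic_imp_constant_or_avoid[OF mero] by (auto simp: eventually_cosparse_open_eq)
  then show ?thesis
    by (simp add: eventually_cosparse_open_eq)
qed

lemma countable_poles:
  assumes "f meromorphic_on A" "open A"
  shows "countable {z\<in>A. is_pole f z}"
proof -
  have "countable (A \<inter> {w. \<not> f analytic_on {w}})"
    using assms by (intro sparse_imp_countable meromorphic_on_imp_sparse_singularities)
  moreover have "{z\<in>A. is_pole f z} \<subseteq> A \<inter> {w. \<not> f analytic_on {w}}"
    using analytic_at_imp_no_pole by blast
  ultimately show ?thesis
    by (rule countable_subset[rotated])
qed

text \<open>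
  For poles \<open>p = \<beta>\<^sub>s z + \<gamma>\<^sub>s\<close> and \<open>p' = \<beta>\<^sub>s\<^sub>' z + \<gamma>\<^sub>s\<^sub>'\<close> of \<open>\<sigma>\<close> the difference \<open>p/\<beta>\<^sub>s - p'/\<beta>\<^sub>s\<^sub>'\<close> is
  the real number \<open>\<gamma>\<^sub>s/\<beta>\<^sub>s - \<gamma>\<^sub>s\<^sub>'/\<beta>\<^sub>s\<^sub>'\<close>; taking real parts only serves to make the set an image of
  \<open>I \<times> I \<times> poles \<times> poles\<close>.
\<close>
definition pole_offsets :: "(complex \<Rightarrow> complex) \<Rightarrow> 'i set \<Rightarrow> ('i \<Rightarrow> real) \<Rightarrow> real set" where
  "pole_offsets \<sigma> I \<beta> = (\<lambda>(s, s', p, p'). Re (p / of_real (\<beta> s) - p' / of_real (\<beta> s')))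
      ` (I \<times> I \<times> {p. is_pole \<sigma> p} \<times> {p. is_pole \<sigma> p})"

definition pole_offset_sums :: "(complex \<Rightarrow> complex) \<Rightarrow> 'i set \<Rightarrow> ('i \<Rightarrow> real) \<Rightarrow> real set" where
  "pole_offset_sums \<sigma> I \<beta> = sum_list ` lists (pole_offsets \<sigma> I \<beta>)"

lemma countable_pole_offset_sums:
  assumes "\<sigma> meromorphic_on UNIV" "countable I"
  shows "countable (pole_offset_sums \<sigma> I \<beta>)"
proof -
  have "countable {p. is_pole \<sigma> p}"
    using countable_poles[OF assms(1)] by simp
  then show ?thesis
    unfolding pole_offset_sums_def pole_offsets_def
    using assms(2) by (intro countable_image countable_lists countable_SIGMA)
qed

lemma zero_in_pole_offset_sums: "0 \<in> pole_offset_sums \<sigma> I \<beta>"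
  unfolding pole_offset_sums_def by (intro image_eqI[of _ _ "[]"]) auto

lemma pole_offset_sums_add:
  assumes "x \<in> pole_offset_sums \<sigma> I \<beta>" "d \<in> pole_offsets \<sigma> I \<beta>"
  shows "d + x \<in> pole_offset_sums \<sigma> I \<beta>"
proof -
  obtain xs where "xs \<in> lists (pole_offsets \<sigma> I \<beta>)" "x = sum_list xs"
    using assms(1) unfolding pole_offset_sums_def by blast
  with assms(2) show ?thesis
    unfolding pole_offset_sums_def by (intro image_eqI[of _ _ "d # xs"]) auto
qed

lemma offset_in_pole_offsets:
  assumes "s \<in> I" "s' \<in> I" "\<beta> s \<noteq> 0" "\<beta> s' \<noteq> 0"
    and "is_pole \<sigma> (of_real (\<beta> s) * z + of_real (\<gamma> s))"
    and "is_pole \<sigma> (of_real (\<beta> s') * z + of_real (\<gamma> s'))"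
  shows "\<gamma> s / \<beta> s - \<gamma> s' / \<beta> s' \<in> pole_offsets \<sigma> I \<beta>"
proof -
  let ?p = "of_real (\<beta> s) * z + of_real (\<gamma> s)" and ?p' = "of_real (\<beta> s') * z + of_real (\<gamma> s')"
  have "?p / of_real (\<beta> s) - ?p' / of_real (\<beta> s') = of_real (\<gamma> s / \<beta> s - \<gamma> s' / \<beta> s')"
    using assms(3,4) by (simp add: field_simps)
  then have "\<gamma> s / \<beta> s - \<gamma> s' / \<beta> s' = Re (?p / of_real (\<beta> s) - ?p' / of_real (\<beta> s'))"
    by simp
  with assms show ?thesis
    unfolding pole_offsets_def by (intro image_eqI[of _ _ "(s, s', ?p, ?p')"]) auto
qed

lemma pole_offset_sums_step:
  assumes "\<gamma> s / \<beta> s - c \<in> pole_offset_sums \<sigma> I \<beta>" "s \<in> I" "s' \<in> I" "\<beta> s \<noteq> 0" "\<beta> s' \<noteq> 0"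
    and "is_pole \<sigma> (of_real (\<beta> s) * z + of_real (\<gamma> s))"
    and "is_pole \<sigma> (of_real (\<beta> s') * z + of_real (\<gamma> s'))"
  shows "\<gamma> s' / \<beta> s' - c \<in> pole_offset_sums \<sigma> I \<beta>"
proof -
  have "\<gamma> s' / \<beta> s' - \<gamma> s / \<beta> s \<in> pole_offsets \<sigma> I \<beta>"
    by (rule offset_in_pole_offsets[OF assms(3,2,5,4,7,6)])
  from pole_offset_sums_add[OF assms(1) this] show ?thesis
    by simp
qed

lemma shallow_net_no_pole_if_closed:
  assumes mero: "\<sigma> meromorphic_on UNIV" and "finite I" "J \<subseteq> I" and \<beta>: "\<forall>s\<in>I. \<beta> s \<noteq> 0"
    and lim: "(shallow_net \<sigma> I \<alpha> \<beta> \<gamma> \<longlongrightarrow> l) (at z)"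
    and closed: "\<And>s s'. s \<in> J \<Longrightarrow> s' \<in> I \<Longrightarrow> is_pole \<sigma> (of_real (\<beta> s) * z + of_real (\<gamma> s)) \<Longrightarrow>
                   is_pole \<sigma> (of_real (\<beta> s') * z + of_real (\<gamma> s')) \<Longrightarrow> s' \<in> J"
  shows "\<not> is_pole (shallow_net \<sigma> J \<alpha> \<beta> \<gamma>) z"
proof (cases "\<exists>s\<in>J. is_pole \<sigma> (of_real (\<beta> s) * z + of_real (\<gamma> s))")
  case False
  moreover have "\<forall>s\<in>J. \<beta> s \<noteq> 0"
    using \<beta> \<open>J \<subseteq> I\<close> by blast
  ultimately obtain l' where "(shallow_net \<sigma> J \<alpha> \<beta> \<gamma> \<longlongrightarrow> l') (at z)"
    using shallow_net_tendsto[OF mero] by blast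
  then show ?thesis
    by (rule tendsto_imp_not_is_pole)
next
  case True
  with closed have "\<forall>s\<in>I - J. \<not> is_pole \<sigma> (of_real (\<beta> s) * z + of_real (\<gamma> s))"
    by blast
  moreover have "\<forall>s\<in>I - J. \<beta> s \<noteq> 0"
    using \<beta> by blast
  ultimately obtain l' where "(shallow_net \<sigma> (I - J) \<alpha> \<beta> \<gamma> \<longlongrightarrow> l') (at z)"
    using shallow_net_tendsto[OF mero] by blast
  with lim have "((\<lambda>w. shallow_net \<sigma> I \<alpha> \<beta> \<gamma> w - shallow_net \<sigma> (I - J) \<alpha> \<beta> \<gamma> w) \<longlongrightarrow> l - l') (at z)"
    by (intro tendsto_intros)
  then have "(shallow_net \<sigma> J \<alpha> \<beta> \<gamma> \<longlongrightarrow> l - l') (at z)"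
    using shallow_net_split[OF \<open>finite I\<close> \<open>J \<subseteq> I\<close>] by simp
  then show ?thesis
    by (rule tendsto_imp_not_is_pole)
qed

lemma SAC_shallow_net_const:
  assumes "SAC \<sigma>" "finite J" "inj_on (\<lambda>s. (\<beta> s, \<gamma> s)) J"
    and "bounded {z. is_pole (shallow_net \<sigma> J \<alpha> \<beta> \<gamma>) z}"
  shows "\<exists>k. eventually (\<lambda>z. shallow_net \<sigma> J \<alpha> \<beta> \<gamma> z = k) (cosparse UNIV)"
proof -
  define tr where "tr = (\<lambda>s. (\<alpha> s, \<beta> s, \<gamma> s))"
  have "inj_on tr J"
    using assms(3) unfolding tr_def inj_on_def by auto
  then have "(\<lambda>z. \<Sum>(a, b, c)\<in>tr ` J. of_real a * \<sigma> (of_real b * z + of_real c)) = shallow_net \<sigma> J \<alpha> \<beta> \<gamma>"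
    by (simp add: sum.reindex tr_def shallow_net_def fun_eq_iff)
  with assms(1,2,4) show ?thesis
    unfolding SAC_def Let_def by (metis finite_imageI)
qed

lemma lin_dep_with_one_if_shallow_net_const:
  assumes an: "\<forall>x::real. \<sigma> analytic_on {of_real x}" and real: "\<forall>x::real. \<sigma> (of_real x) \<in> \<real>"
    and "s \<in> J" "\<alpha> s \<noteq> 0"
    and const: "eventually (\<lambda>z. shallow_net \<sigma> J \<alpha> \<beta> \<gamma> z = k) (cosparse UNIV)"
  shows "lin_dep_with_one \<sigma> J \<beta> \<gamma>"
proof -
  let ?H = "shallow_net \<sigma> J \<alpha> \<beta> \<gamma>"
  have H_eq: "?H (of_real t) = k" for t
  proof -
    have "(?H \<longlongrightarrow> k) (at (of_real t))"
      using const by (intro tendsto_eventually) (simp add: eventually_cosparse_open_eq)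
    moreover have "(?H \<longlongrightarrow> ?H (of_real t)) (at (of_real t))"
      using isCont_shallow_net_of_real[OF an] by (simp add: isCont_def)
    ultimately show ?thesis
      using tendsto_unique[OF at_neq_bot] by metis
  qed
  have "?H (of_real 0) \<in> \<real>"
    unfolding shallow_net_of_real using real by (intro sum_in_Reals Reals_mult) auto
  then have k: "k = of_real (Re k)"
    using H_eq[of 0] by (simp add: Reals_def)
  show ?thesis
    unfolding lin_dep_with_one_def
  proof (intro exI[of _ \<alpha>] exI[of _ "- Re k"] conjI allI)
    show "- Re k \<noteq> 0 \<or> (\<exists>s\<in>J. \<alpha> s \<noteq> 0)"
      using assms(3,4) by blast
    fix t :: real
    show "(\<Sum>s\<in>J. of_real (\<alpha> s) * \<sigma> (of_real (\<beta> s * t + \<gamma> s))) + of_real (- Re k) = 0"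
      using H_eq[of t] k by (simp add: shallow_net_of_real)
  qed
qed

lemma lin_dep_with_one_duplicate:
  assumes "x \<noteq> y" "\<beta> x = \<beta> y" "\<gamma> x = \<gamma> y"
  shows "lin_dep_with_one \<sigma> {x, y} \<beta> \<gamma>"
  unfolding lin_dep_with_one_def
  by (rule exI[of _ "\<lambda>s. if s = x then 1 else -1"], rule exI[of _ 0]) (use assms in simp)

lemma affine_symmetry_inj_on_proper_subset:
  assumes "affine_symmetry \<sigma> \<zeta> I \<alpha> \<beta> \<gamma>" "J \<subset> I"
  shows "inj_on (\<lambda>s. (\<beta> s, \<gamma> s)) J"
proof (rule inj_onI, rule ccontr)
  fix x y
  assume "x \<in> J" "y \<in> J" "(\<beta> x, \<gamma> x) = (\<beta> y, \<gamma> y)" "x \<noteq> y"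
  then have "lin_dep_with_one \<sigma> {x, y} \<beta> \<gamma>"
    by (intro lin_dep_with_one_duplicate) auto
  moreover have "{x, y} \<subset> I"
    using \<open>x \<in> J\<close> \<open>y \<in> J\<close> by (intro subset_psubset_trans[OF _ assms(2)]) auto
  ultimately show False
    using assms(1)
    unfolding affine_symmetry_def by blast
qed

lemma all_real_shift: "(\<forall>t::real. P (t + u)) \<longleftrightarrow> (\<forall>t. P t)"
  by (metis diff_add_cancel)

lemma all_shift_offsets:
  "(\<forall>t::real. \<Phi> (\<lambda>s. \<beta> s * t + (\<gamma> s + u * \<beta> s))) \<longleftrightarrow> (\<forall>t. \<Phi> (\<lambda>s. \<beta> s * t + \<gamma> s))"
proof -
  have "(\<lambda>s. \<beta> s * t + (\<gamma> s + u * \<beta> s)) = (\<lambda>s. \<beta> s * (t + u) + \<gamma> s)" for t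
    by (simp add: algebra_simps)
  then show ?thesis
    using all_real_shift[of "\<lambda>t. \<Phi> (\<lambda>s. \<beta> s * t + \<gamma> s)" u] by simp
qed

lemma lin_dep_with_one_shift:
  "lin_dep_with_one \<sigma> J \<beta> (\<lambda>s. \<gamma> s + u * \<beta> s) \<longleftrightarrow> lin_dep_with_one \<sigma> J \<beta> \<gamma>"
proof -
  have "(\<forall>t. (\<Sum>s\<in>J. of_real (c s) * \<sigma> (of_real (\<beta> s * t + (\<gamma> s + u * \<beta> s)))) + of_real c0 = 0) \<longleftrightarrow>
        (\<forall>t. (\<Sum>s\<in>J. of_real (c s) * \<sigma> (of_real (\<beta> s * t + \<gamma> s))) + of_real c0 = 0)" for c c0
    by (rule all_shift_offsets[where \<Phi> = "\<lambda>x. (\<Sum>s\<in>J. of_real (c s) * \<sigma> (of_real (x s))) + of_real c0 = 0"])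
  then show ?thesis
    unfolding lin_dep_with_one_def by simp
qed

lemma affine_symmetry_shift:
  "affine_symmetry \<sigma> \<zeta> I \<alpha> \<beta> (\<lambda>s. \<gamma> s + u * \<beta> s) \<longleftrightarrow> affine_symmetry \<sigma> \<zeta> I \<alpha> \<beta> \<gamma>"
proof -
  have "(\<forall>t. (\<Sum>s\<in>I. of_real (\<alpha> s) * \<sigma> (of_real (\<beta> s * t + (\<gamma> s + u * \<beta> s)))) = of_real \<zeta>) \<longleftrightarrow>
        (\<forall>t. (\<Sum>s\<in>I. of_real (\<alpha> s) * \<sigma> (of_real (\<beta> s * t + \<gamma> s))) = of_real \<zeta>)"
    by (rule all_shift_offsets[where \<Phi> = "\<lambda>x. (\<Sum>s\<in>I. of_real (\<alpha> s) * \<sigma> (of_real (x s))) = of_real \<zeta>"])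
  then show ?thesis
    unfolding affine_symmetry_def lin_dep_with_one_shift by simp
qed

lemma affine_symmetry_proper_subnet_has_pole:
  assumes mn: "meromorphic_nonlinearity \<sigma>" and sac: "SAC \<sigma>"
    and sym: "affine_symmetry \<sigma> \<zeta> I \<alpha> \<beta> \<gamma>" and "J \<subset> I" "s \<in> J" "\<alpha> s \<noteq> 0"
  shows "\<exists>z. is_pole (shallow_net \<sigma> J \<alpha> \<beta> \<gamma>) z"
proof (rule ccontr)
  assume "\<nexists>z. is_pole (shallow_net \<sigma> J \<alpha> \<beta> \<gamma>) z"
  then have bounded: "bounded {z. is_pole (shallow_net \<sigma> J \<alpha> \<beta> \<gamma>) z}"
    by simp
  have "finite I" and minimal: "\<not> (\<exists>J\<subset>I. lin_dep_with_one \<sigma> J \<beta> \<gamma>)"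
    using sym unfolding affine_symmetry_def by blast+
  have "finite J"
    using finite_subset[OF psubset_imp_subset[OF \<open>J \<subset> I\<close>] \<open>finite I\<close>] .
  then obtain k where const: "eventually (\<lambda>z. shallow_net \<sigma> J \<alpha> \<beta> \<gamma> z = k) (cosparse UNIV)"
    using SAC_shallow_net_const[OF sac _ affine_symmetry_inj_on_proper_subset[OF sym \<open>J \<subset> I\<close>] bounded]
    by blast
  have "\<forall>x::real. \<sigma> analytic_on {of_real x}" and "\<forall>x::real. \<sigma> (of_real x) \<in> \<real>"
    using mn unfolding meromorphic_nonlinearity_def by blast+
  then have "lin_dep_with_one \<sigma> J \<beta> \<gamma>"
    using \<open>s \<in> J\<close> \<open>\<alpha> s \<noteq> 0\<close> const by (rule lin_dep_with_one_if_shallow_net_const)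
  with minimal \<open>J \<subset> I\<close> show False
    by blast
qed

lemma affine_symmetry_offset_in_pole_offset_sums:
  assumes mn: "meromorphic_nonlinearity \<sigma>" and sac: "SAC \<sigma>"
    and sym: "affine_symmetry \<sigma> \<zeta> I \<alpha> \<beta> \<gamma>"
    and \<alpha>: "\<forall>s\<in>I. \<alpha> s \<noteq> 0" and \<beta>: "\<forall>s\<in>I. \<beta> s \<noteq> 0" and "s \<in> I" "s\<^sub>0 \<in> I"
  shows "\<gamma> s / \<beta> s - \<gamma> s\<^sub>0 / \<beta> s\<^sub>0 \<in> pole_offset_sums \<sigma> I \<beta>"
proof (rule ccontr)
  assume not_in: "\<gamma> s / \<beta> s - \<gamma> s\<^sub>0 / \<beta> s\<^sub>0 \<notin> pole_offset_sums \<sigma> I \<beta>"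
  have mero: "\<sigma> meromorphic_on UNIV"
    using mn unfolding meromorphic_nonlinearity_def by blast
  have "finite I" and sym_eq: "\<forall>t. shallow_net \<sigma> I \<alpha> \<beta> \<gamma> (of_real t) = of_real \<zeta>"
    using sym unfolding affine_symmetry_def shallow_net_of_real by blast+
  define J where "J = {s\<in>I. \<gamma> s / \<beta> s - \<gamma> s\<^sub>0 / \<beta> s\<^sub>0 \<in> pole_offset_sums \<sigma> I \<beta>}"
  have "s\<^sub>0 \<in> J" "J \<subset> I"
    using zero_in_pole_offset_sums not_in \<open>s \<in> I\<close> \<open>s\<^sub>0 \<in> I\<close> unfolding J_def by auto
  then obtain z where pole: "is_pole (shallow_net \<sigma> J \<alpha> \<beta> \<gamma>) z"
    using affine_symmetry_proper_subnet_has_pole[OF mn sac sym] \<alpha> \<open>s\<^sub>0 \<in> I\<close> by blast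
  have "eventually (\<lambda>w. shallow_net \<sigma> I \<alpha> \<beta> \<gamma> w = of_real \<zeta>) (at z)"
    using meromorphic_eventually_eq_if_const_on_reals[OF shallow_net_meromorphic[OF mero] sym_eq] .
  then have lim: "(shallow_net \<sigma> I \<alpha> \<beta> \<gamma> \<longlongrightarrow> of_real \<zeta>) (at z)"
    by (rule tendsto_eventually)
  have "\<not> is_pole (shallow_net \<sigma> J \<alpha> \<beta> \<gamma>) z"
  proof (rule shallow_net_no_pole_if_closed[OF mero \<open>finite I\<close> _ \<beta> lim])
    show "J \<subseteq> I"
      using \<open>J \<subset> I\<close> by blast
    fix s1 s'
    assume "s1 \<in> J" "s' \<in> I" "is_pole \<sigma> (of_real (\<beta> s1) * z + of_real (\<gamma> s1))"
      "is_pole \<sigma> (of_real (\<beta> s') * z + of_real (\<gamma> s'))"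
    with \<beta> show "s' \<in> J"
      unfolding J_def by (blast intro: pole_offset_sums_step)
  qed
  with pole show False
    by blast
qed

lemma shift_invariant_eq_Union_lines:
  fixes \<Gamma> :: "('i \<Rightarrow> real) set"
  assumes shift: "\<And>\<gamma> t. \<gamma> \<in> \<Gamma> \<Longrightarrow> (\<lambda>s. \<gamma> s + t * \<beta> s) \<in> \<Gamma>" and "\<beta> s\<^sub>0 \<noteq> 0"
  shows "\<Gamma> = (\<Union>g\<in>{\<gamma>\<in>\<Gamma>. \<gamma> s\<^sub>0 = 0}. {(\<lambda>s. g s + t * \<beta> s) | t. True})"
proof (intro equalityI subsetI)
  fix \<gamma>
  assume "\<gamma> \<in> \<Gamma>"
  define g where "g = (\<lambda>s. \<gamma> s + (- \<gamma> s\<^sub>0 / \<beta> s\<^sub>0) * \<beta> s)"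
  have "g \<in> \<Gamma>"
    unfolding g_def by (rule shift[OF \<open>\<gamma> \<in> \<Gamma>\<close>])
  moreover have "g s\<^sub>0 = 0"
    using \<open>\<beta> s\<^sub>0 \<noteq> 0\<close> unfolding g_def by simp
  moreover have "\<gamma> = (\<lambda>s. g s + (\<gamma> s\<^sub>0 / \<beta> s\<^sub>0) * \<beta> s)"
    unfolding g_def by (simp add: fun_eq_iff algebra_simps)
  ultimately show "\<gamma> \<in> (\<Union>g\<in>{\<gamma>\<in>\<Gamma>. \<gamma> s\<^sub>0 = 0}. {(\<lambda>s. g s + t * \<beta> s) | t. True})"
    by blast
qed (use shift in blast)

lemma countable_funs_with_ratios_in:
  fixes \<beta> :: "'i::finite \<Rightarrow> real"
  assumes "countable G" "\<forall>s. \<beta> s \<noteq> 0"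
  shows "countable {\<gamma>. \<forall>s. \<gamma> s / \<beta> s \<in> G}"
proof (rule countable_image_inj_on)
  let ?ratios = "\<lambda>\<gamma> s. \<gamma> s / \<beta> s"
  have "?ratios ` {\<gamma>. \<forall>s. \<gamma> s / \<beta> s \<in> G} \<subseteq> Pi\<^sub>E (UNIV :: 'i set) (\<lambda>_. G)"
    by (auto simp: PiE_UNIV_domain)
  moreover have "countable (Pi\<^sub>E (UNIV :: 'i set) (\<lambda>_. G))"
    using assms(1) by (intro countable_PiE) auto
  ultimately show "countable (?ratios ` {\<gamma>. \<forall>s. \<gamma> s / \<beta> s \<in> G})"
    by (rule countable_subset)
  show "inj_on ?ratios {\<gamma>. \<forall>s. \<gamma> s / \<beta> s \<in> G}"
    using assms(2) by (simp add: inj_on_def fun_eq_iff)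
qed

theorem lemma8:
  fixes \<sigma> :: "complex \<Rightarrow> complex" and \<beta> :: "'i::finite \<Rightarrow> real"
  assumes "meromorphic_nonlinearity \<sigma>"
    and "SAC \<sigma>"
    and "\<forall>s. \<beta> s \<noteq> 0"
  shows "\<exists>\<Gamma>' :: ('i \<Rightarrow> real) set. countable \<Gamma>' \<and>
     {\<gamma>. \<exists>\<zeta> \<alpha>. (\<forall>s. \<alpha> s \<noteq> 0) \<and> affine_symmetry \<sigma> \<zeta> UNIV \<alpha> \<beta> \<gamma>}
       = (\<Union>g\<in>\<Gamma>'. {(\<lambda>s. g s + t * \<beta> s) | t. True})"
proof -
  define \<Gamma> where "\<Gamma> = {\<gamma>. \<exists>\<zeta> \<alpha>. (\<forall>s. \<alpha> s \<noteq> 0) \<and> affine_symmetry \<sigma> \<zeta> UNIV \<alpha> \<beta> \<gamma>}"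
  fix s\<^sub>0 :: 'i
  have lines: "\<Gamma> = (\<Union>g\<in>{\<gamma>\<in>\<Gamma>. \<gamma> s\<^sub>0 = 0}. {(\<lambda>s. g s + t * \<beta> s) | t. True})"
    using assms(3) unfolding \<Gamma>_def
    by (intro shift_invariant_eq_Union_lines) (auto simp: affine_symmetry_shift)
  have offsets: "\<gamma> s / \<beta> s \<in> pole_offset_sums \<sigma> UNIV \<beta>" if "\<gamma> \<in> \<Gamma>" "\<gamma> s\<^sub>0 = 0" for \<gamma> s
  proof -
    obtain \<zeta> \<alpha> where "\<forall>s. \<alpha> s \<noteq> 0" "affine_symmetry \<sigma> \<zeta> UNIV \<alpha> \<beta> \<gamma>"
      using \<open>\<gamma> \<in> \<Gamma>\<close> unfolding \<Gamma>_def by blast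
    then have "\<gamma> s / \<beta> s - \<gamma> s\<^sub>0 / \<beta> s\<^sub>0 \<in> pole_offset_sums \<sigma> UNIV \<beta>"
      using assms(3) by (intro affine_symmetry_offset_in_pole_offset_sums[OF assms(1,2)]) auto
    with \<open>\<gamma> s\<^sub>0 = 0\<close> show ?thesis
      by simp
  qed
  have "countable {\<gamma>. \<forall>s. \<gamma> s / \<beta> s \<in> pole_offset_sums \<sigma> UNIV \<beta>}"
    using assms(1,3) unfolding meromorphic_nonlinearity_def
    by (intro countable_funs_with_ratios_in countable_pole_offset_sums) auto
  then have "countable {\<gamma>\<in>\<Gamma>. \<gamma> s\<^sub>0 = 0}"
    by (rule countable_subset[rotated]) (use offsets in blast)
  with lines show ?thesis
    unfolding \<Gamma>_def by blast
qed

end
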